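(* Let $n\ge 3$ and let $a_k,b_k\in\mathbb{R}$ with $a_k^2+b_k^2\ne 0$ for $k=1,\dots,n$, defining lines $l^k:=\{(x,y):a_kx+b_ky-1=0\}$. Assume $$a_ib_{i^\oplus}-b_ia_{i^\oplus}>0\quad\text{for all } i\in\{1,\dots,n\}$$ (so the intersection points $V_{ii^\oplus}:=l^i\cap l^{i^\oplus}$ exist), and $$-a_k(b_i-b_j)+b_k(a_i-a_j)-(a_ib_j-b_ia_j)<0\quad\text{for all } i\in\{1,\dots,n\},\ j=i^{\oplus},\ k\in\{1,\dots,n\}\setminus\{i,j\}.$$ Let $S:=\{(x,y)\in\mathbb{R}^2: a_kx+b_ky-1\le 0 \text{ for all } k=1,\dots,n\}$. Then the boundary of $S$ is an enclosed, non-degenerate, $n$-sided convex polygon containing the origin $(0,0)$ in its interior; namely, it is the closed polygon formed by the sequence of points $(V_{12},V_{23},\dots,V_{(n-1)n},V_{n1},V_{12})$, whose $n$ vertices $V_{12},\dots,V_{n1}$ are pairwise distinct, with no three cyclically consecutive vertices collinear, and whose edge $[V_{k^\ominus k},V_{kk^\oplus}]$ lies on $l^k$ for each $k$.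
   Context: For $i\in\{1,\dots,n\}$, $i^{\oplus}:=i+1$ if $i\le n-1$ and $n^{\oplus}:=1$; $i^{\ominus}$ is defined by $j=i^{\ominus}$ iff $j^{\oplus}=i$. For lines $l^i,l^j$ with $D_{ij}:=a_ib_j-b_ia_j\ne0$, $l^i\cap l^j$ is the single point $\left(-\frac{b_i-b_j}{D_{ij}},\frac{a_i-a_j}{D_{ij}}\right)$. *)

theory Defs
  imports "HOL-Analysis.Analysis"
begin

definition cnext :: "nat \<Rightarrow> nat \<Rightarrow> nat" where
  "cnext n i = (if i \<le> n - 1 then i + 1 else 1)"

definition cprev :: "nat \<Rightarrow> nat \<Rightarrow> nat" where
  "cprev n i = (if i = 1 then n else i - 1)"

definition line :: "(nat \<Rightarrow> real) \<Rightarrow> (nat \<Rightarrow> real) \<Rightarrow> nat \<Rightarrow> (real \<times> real) set" where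
  "line a b k = {(x, y). a k * x + b k * y - 1 = 0}"

definition Dt :: "(nat \<Rightarrow> real) \<Rightarrow> (nat \<Rightarrow> real) \<Rightarrow> nat \<Rightarrow> nat \<Rightarrow> real" where
  "Dt a b i j = a i * b j - b i * a j"

text \<open>Intersection point of l^i and l^j (when D_ij is nonzero).\<close>
definition isect :: "(nat \<Rightarrow> real) \<Rightarrow> (nat \<Rightarrow> real) \<Rightarrow> nat \<Rightarrow> nat \<Rightarrow> real \<times> real" where
  "isect a b i j = (- (b i - b j) / Dt a b i j, (a i - a j) / Dt a b i j)"

definition region :: "nat \<Rightarrow> (nat \<Rightarrow> real) \<Rightarrow> (nat \<Rightarrow> real) \<Rightarrow> (real \<times> real) set" where
  "region n a b = {(x, y). \<forall>k\<in>{1..n}. a k * x + b k * y - 1 \<le> 0}"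

end

(* The region S = {x. u_k . x <= 1 for all k}, with normals u_k = (a_k, b_k), is the polar of
   {u_1, ..., u_n}: a closed convex set with the origin in its interior, whose boundary consists of
   the points of S on some line l^k. By hypothesis V_{i,i+1} lies on l^i and l^{i+1} and strictly
   inside every other half-plane. So a boundary point on l^k is squeezed between V_{k-1,k} and
   V_{k,k+1} by the half-planes of l^{k-1} and l^{k+1}, and the boundary is the union of the n
   edges. S is bounded because a plane set with bounded boundary and unbounded complement is
   bounded. The same strict inequalities tell the vertices apart and rule out collinear
   consecutive triples. *)

theory Submission
  imports Defs
begin

definition polar :: "'a::real_inner set \<Rightarrow> 'a set" where
  "polar U = {x. \<forall>v\<in>U. v \<bullet> x \<le> 1}"

lemma polar_eq_INT: "polar U = (\<Inter>v\<in>U. {x. v \<bullet> x \<le> 1})"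
  by (auto simp: polar_def)

lemma convex_polar: "convex (polar U)"
  unfolding polar_eq_INT by (intro convex_INT convex_halfspace_le)

lemma closed_polar: "closed (polar U)"
  unfolding polar_eq_INT by (intro closed_INT ballI closed_halfspace_le)

lemma interior_polar:
  fixes U :: "'a::euclidean_space set"
  assumes "finite U" and "0 \<notin> U"
  shows "interior (polar U) = {x. \<forall>v\<in>U. v \<bullet> x < 1}"
proof
  show "interior (polar U) \<subseteq> {x. \<forall>v\<in>U. v \<bullet> x < 1}"
  proof safe
    fix x v assume x: "x \<in> interior (polar U)" and v: "v \<in> U"
    have "polar U \<subseteq> {x. v \<bullet> x \<le> 1}"
      using v by (auto simp: polar_def)
    then have "x \<in> interior {x. v \<bullet> x \<le> 1}"
      using x interior_mono by blast
    then show "v \<bullet> x < 1"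
      using v \<open>0 \<notin> U\<close> by (metis interior_halfspace_le mem_Collect_eq)
  qed
  have "{x. \<forall>v\<in>U. v \<bullet> x < 1} \<subseteq> polar U"
    by (auto simp: polar_def less_imp_le)
  moreover have "open {x. \<forall>v\<in>U. v \<bullet> x < 1}"
    using open_INT[OF \<open>finite U\<close>, of "\<lambda>v. {x. v \<bullet> x < 1}"]
    by (simp add: open_halfspace_lt Collect_ball_eq)
  ultimately show "{x. \<forall>v\<in>U. v \<bullet> x < 1} \<subseteq> interior (polar U)"
    by (rule interior_maximal)
qed

lemma frontier_polar:
  fixes U :: "'a::euclidean_space set"
  assumes "finite U" and "0 \<notin> U"
  shows "frontier (polar U) = {x \<in> polar U. \<exists>v\<in>U. v \<bullet> x = 1}"
  unfolding frontier_def closure_closed[OF closed_polar] interior_polar[OF assms]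
  by (auto simp: polar_def order_less_le)

lemma not_bounded_complement_polar:
  fixes U :: "'a::euclidean_space set"
  assumes "2 \<le> DIM('a)" and "v \<in> U" and "v \<noteq> 0"
  shows "\<not> bounded (- polar U)"
proof
  assume "bounded (- polar U)"
  moreover have "{x. v \<bullet> x = 2} \<subseteq> - polar U"
    using \<open>v \<in> U\<close> by (auto simp: polar_def)
  ultimately have "bounded {x. v \<bullet> x = 2}"
    by (rule bounded_subset)
  then show False
    using assms by (simp add: bounded_hyperplane_eq_trivial)
qed

lemma bounded_if_bounded_frontier:
  fixes S :: "'a::euclidean_space set"
  assumes "2 \<le> DIM('a)" and "bounded (frontier S)" and "\<not> bounded (- S)"
  shows "bounded S"
proof -
  obtain R where R: "\<forall>x\<in>frontier S. norm x \<le> R"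
    using \<open>bounded (frontier S)\<close> bounded_iff by blast
  obtain y where y: "y \<in> - S" "\<not> norm y \<le> R"
    using \<open>\<not> bounded (- S)\<close> bounded_iff by blast
  have "connected (- cball (0::'a) R)"
    using \<open>2 \<le> DIM('a)\<close> by (intro connected_complement_bounded_convex) auto
  have "norm x \<le> R" if "x \<in> S" for x
  proof (rule ccontr)
    assume "\<not> norm x \<le> R"
    then have "- cball 0 R \<inter> S \<noteq> {}" "- cball 0 R - S \<noteq> {}"
      using \<open>x \<in> S\<close> y by auto
    then have "- cball 0 R \<inter> frontier S \<noteq> {}"
      using \<open>connected (- cball 0 R)\<close> connected_Int_frontier by blast
    then show False
      using R by auto
  qed
  then show ?thesis
    unfolding bounded_iff by blast
qed

lemma collinear_hyperplane:
  fixes v :: "'a::euclidean_space"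
  assumes "DIM('a) = 2" and "v \<noteq> 0"
  shows "collinear {x. v \<bullet> x = c}"
  using assms by (simp add: collinear_aff_dim)

lemma in_closed_segment_if_between_halfspaces:
  fixes A B p :: "'a::real_inner"
  assumes "collinear {A, p, B}"
    and "v \<bullet> A = 1" and "v \<bullet> B < 1" and "v \<bullet> p \<le> 1"
    and "w \<bullet> A < 1" and "w \<bullet> B = 1" and "w \<bullet> p \<le> 1"
  shows "p \<in> closed_segment A B"
proof -
  have "A \<noteq> B"
    using assms(2,3) by auto
  then obtain t where p: "p = t *\<^sub>R A + (1 - t) *\<^sub>R B"
    using \<open>collinear {A, p, B}\<close> collinear_3_expand by blast
  have "(1 - t) * (v \<bullet> B - 1) \<le> 0"
    using assms(2,4) by (simp add: p algebra_simps)
  then have "t \<le> 1"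
    using \<open>v \<bullet> B < 1\<close> by (simp add: mult_le_0_iff)
  have "t * (w \<bullet> A - 1) \<le> 0"
    using assms(6,7) by (simp add: p algebra_simps)
  then have "0 \<le> t"
    using \<open>w \<bullet> A < 1\<close> by (simp add: mult_le_0_iff)
  show ?thesis
    unfolding in_segment using \<open>0 \<le> t\<close> \<open>t \<le> 1\<close> p
    by (intro exI[of _ "1 - t"]) auto
qed

lemma not_collinear_if_between_halfspaces:
  fixes A B C :: "'a::real_inner"
  assumes "v \<bullet> A = 1" and "v \<bullet> B = 1" and "v \<bullet> C < 1"
    and "w \<bullet> A < 1" and "w \<bullet> B = 1" and "w \<bullet> C = 1"
  shows "\<not> collinear {A, B, C}"
proof
  assume "collinear {A, B, C}"
  moreover have "A \<noteq> C"
    using assms(1,3) by auto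
  ultimately obtain t where B: "B = t *\<^sub>R A + (1 - t) *\<^sub>R C"
    using collinear_3_expand by blast
  have "(1 - t) * (v \<bullet> C - 1) = 0" "t * (w \<bullet> A - 1) = 0"
    using assms by (simp_all add: B algebra_simps)
  then show False
    using assms(3,4) by simp
qed

lemma cnext_mem: "i \<in> {1..n} \<Longrightarrow> cnext n i \<in> {1..n}"
  unfolding cnext_def atLeastAtMost_iff by presburger

lemma cprev_mem: "i \<in> {1..n} \<Longrightarrow> cprev n i \<in> {1..n}"
  unfolding cprev_def atLeastAtMost_iff by presburger

lemma cnext_cprev: "i \<in> {1..n} \<Longrightarrow> cnext n (cprev n i) = i"
  unfolding cnext_def cprev_def atLeastAtMost_iff by presburger

lemma cnext_neq_self: "2 \<le> n \<Longrightarrow> i \<in> {1..n} \<Longrightarrow> cnext n i \<noteq> i"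
  unfolding cnext_def atLeastAtMost_iff by presburger

lemma cprev_neq_self: "2 \<le> n \<Longrightarrow> i \<in> {1..n} \<Longrightarrow> cprev n i \<noteq> i"
  unfolding cprev_def atLeastAtMost_iff by presburger

lemma cprev_neq_cnext: "3 \<le> n \<Longrightarrow> i \<in> {1..n} \<Longrightarrow> cprev n i \<noteq> cnext n i"
  unfolding cnext_def cprev_def atLeastAtMost_iff by presburger

lemma cnext_cnext_neq_self: "3 \<le> n \<Longrightarrow> i \<in> {1..n} \<Longrightarrow> cnext n (cnext n i) \<noteq> i"
  unfolding cnext_def atLeastAtMost_iff by presburger

lemma inj_on_cnext: "inj_on (cnext n) {1..n}"
  unfolding inj_on_def cnext_def atLeastAtMost_iff by presburger

locale polar_polygon =
  fixes n :: nat and u V :: "nat \<Rightarrow> 'a::euclidean_space"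
  assumes three_le_n: "3 \<le> n"
    and normal_nonzero: "k \<in> {1..n} \<Longrightarrow> u k \<noteq> 0"
    and vertex_on_line: "i \<in> {1..n} \<Longrightarrow> u i \<bullet> V i = 1"
    and vertex_on_next_line: "i \<in> {1..n} \<Longrightarrow> u (cnext n i) \<bullet> V i = 1"
    and vertex_off_line:
      "i \<in> {1..n} \<Longrightarrow> k \<in> {1..n} \<Longrightarrow> k \<noteq> i \<Longrightarrow> k \<noteq> cnext n i \<Longrightarrow> u k \<bullet> V i < 1"
begin

abbreviation polygon :: "'a set" where
  "polygon \<equiv> polar (u ` {1..n})"

lemma zero_notin_normals: "0 \<notin> u ` {1..n}"
  using normal_nonzero by auto

lemma interior_polygon: "interior polygon = {x. \<forall>k\<in>{1..n}. u k \<bullet> x < 1}"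
  unfolding interior_polar[OF finite_imageI[OF finite_atLeastAtMost] zero_notin_normals] by blast

lemma frontier_polygon_eq:
  "frontier polygon = {x \<in> polygon. \<exists>k\<in>{1..n}. u k \<bullet> x = 1}"
  unfolding frontier_polar[OF finite_imageI[OF finite_atLeastAtMost] zero_notin_normals] by blast

lemma vertex_mem_polygon:
  assumes i: "i \<in> {1..n}"
  shows "V i \<in> polygon"
proof -
  have "u k \<bullet> V i \<le> 1" if k: "k \<in> {1..n}" for k
    using vertex_on_line[OF i] vertex_on_next_line[OF i] vertex_off_line[OF i k]
    by (cases "k = i \<or> k = cnext n i") auto
  then show ?thesis
    by (auto simp: polar_def)
qed

lemma prev_vertex_on_line: "k \<in> {1..n} \<Longrightarrow> u k \<bullet> V (cprev n k) = 1"
  using vertex_on_next_line[OF cprev_mem] cnext_cprev by metis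

lemma edge_subset_polygon:
  "k \<in> {1..n} \<Longrightarrow> closed_segment (V (cprev n k)) (V k) \<subseteq> polygon"
  by (intro closed_segment_subset convex_polar vertex_mem_polygon cprev_mem)

lemma edge_subset_line:
  "k \<in> {1..n} \<Longrightarrow> closed_segment (V (cprev n k)) (V k) \<subseteq> {x. u k \<bullet> x = 1}"
  by (intro closed_segment_subset convex_hyperplane)
    (simp_all add: prev_vertex_on_line vertex_on_line)

lemma frontier_polygon:
  assumes "DIM('a) = 2"
  shows "frontier polygon = (\<Union>k\<in>{1..n}. closed_segment (V (cprev n k)) (V k))"
proof (intro equalityI subsetI)
  fix x assume "x \<in> frontier polygon"
  then obtain k where k: "k \<in> {1..n}" and x: "x \<in> polygon" "u k \<bullet> x = 1"
    unfolding frontier_polygon_eq by blast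
  have "collinear {V (cprev n k), x, V k}"
    using collinear_hyperplane[OF assms normal_nonzero[OF k], where c = 1]
    by (rule collinear_subset) (simp add: x prev_vertex_on_line[OF k] vertex_on_line[OF k])
  moreover have "u (cprev n k) \<bullet> V (cprev n k) = 1"
    using vertex_on_line[OF cprev_mem[OF k]] .
  moreover have "u (cprev n k) \<bullet> V k < 1"
    using vertex_off_line[OF k cprev_mem[OF k]] cprev_neq_self[OF _ k]
      cprev_neq_cnext[OF three_le_n k] three_le_n by simp
  moreover have "u (cprev n k) \<bullet> x \<le> 1"
    using x(1) cprev_mem[OF k] unfolding polar_def by blast
  moreover have "u (cnext n k) \<bullet> V (cprev n k) < 1"
    using vertex_off_line[OF cprev_mem[OF k] cnext_mem[OF k]] cprev_neq_cnext[OF three_le_n k]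
      cnext_neq_self[OF _ k] cnext_cprev[OF k] three_le_n by auto
  moreover have "u (cnext n k) \<bullet> V k = 1"
    using vertex_on_next_line[OF k] .
  moreover have "u (cnext n k) \<bullet> x \<le> 1"
    using x(1) cnext_mem[OF k] unfolding polar_def by blast
  ultimately have "x \<in> closed_segment (V (cprev n k)) (V k)"
    by (rule in_closed_segment_if_between_halfspaces)
  then show "x \<in> (\<Union>k\<in>{1..n}. closed_segment (V (cprev n k)) (V k))"
    using k by blast
next
  fix x assume "x \<in> (\<Union>k\<in>{1..n}. closed_segment (V (cprev n k)) (V k))"
  then obtain k where "k \<in> {1..n}" "x \<in> closed_segment (V (cprev n k)) (V k)"
    by blast
  then have "x \<in> polygon" "u k \<bullet> x = 1"
    using edge_subset_polygon edge_subset_line by blast+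
  then show "x \<in> frontier polygon"
    using \<open>k \<in> {1..n}\<close> unfolding frontier_polygon_eq by blast
qed

lemma bounded_polygon:
  assumes "DIM('a) = 2"
  shows "bounded polygon"
proof (rule bounded_if_bounded_frontier)
  show "bounded (frontier polygon)"
    unfolding frontier_polygon[OF assms] by (auto intro: bounded_closed_segment)
  show "\<not> bounded (- polygon)"
    using three_le_n normal_nonzero[of 1] assms
    by (intro not_bounded_complement_polar[where v = "u 1"]) auto
qed (simp add: assms)

lemma inj_on_vertices: "inj_on V {1..n}"
proof (rule inj_onI, rule ccontr)
  fix i j assume i: "i \<in> {1..n}" and j: "j \<in> {1..n}" and "V i = V j" "i \<noteq> j"
  have "u i \<bullet> V j = 1" "u (cnext n i) \<bullet> V j = 1"
    using \<open>V i = V j\<close> i vertex_on_line vertex_on_next_line by metis+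
  moreover have "cnext n i \<noteq> cnext n j"
    using inj_on_contraD[OF inj_on_cnext \<open>i \<noteq> j\<close> i j] .
  ultimately have "i = cnext n j" "cnext n i = j"
    using vertex_off_line[OF j i] vertex_off_line[OF j cnext_mem[OF i]] \<open>i \<noteq> j\<close> by force+
  then show False
    using cnext_cnext_neq_self[OF three_le_n j] by simp
qed

lemma vertices_not_collinear:
  assumes k: "k \<in> {1..n}"
  shows "\<not> collinear {V (cprev n k), V k, V (cnext n k)}"
proof (rule not_collinear_if_between_halfspaces)
  show "u k \<bullet> V (cprev n k) = 1"
    using prev_vertex_on_line[OF k] .
  show "u k \<bullet> V k = 1"
    using vertex_on_line[OF k] .
  show "u k \<bullet> V (cnext n k) < 1"
    using vertex_off_line[OF cnext_mem[OF k] k] cnext_neq_self[OF _ k]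
      cnext_cnext_neq_self[OF three_le_n k] three_le_n by auto
  show "u (cnext n k) \<bullet> V (cprev n k) < 1"
    using vertex_off_line[OF cprev_mem[OF k] cnext_mem[OF k]] cprev_neq_cnext[OF three_le_n k]
      cnext_neq_self[OF _ k] cnext_cprev[OF k] three_le_n by auto
  show "u (cnext n k) \<bullet> V k = 1"
    using vertex_on_next_line[OF k] .
  show "u (cnext n k) \<bullet> V (cnext n k) = 1"
    using vertex_on_line[OF cnext_mem[OF k]] .
qed

end

lemma region_eq_polar: "region n a b = polar ((\<lambda>k. (a k, b k)) ` {1..n})"
  by (auto simp: region_def polar_def)

lemma line_eq_hyperplane: "line a b k = {x. (a k, b k) \<bullet> x = 1}"
  by (auto simp: line_def)

lemma inner_isect:
  "(a k, b k) \<bullet> isect a b i j = (b k * (a i - a j) - a k * (b i - b j)) / Dt a b i j"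
  by (simp add: isect_def add_divide_distrib diff_divide_distrib algebra_simps)

lemma inner_isect_left: "Dt a b i j \<noteq> 0 \<Longrightarrow> (a i, b i) \<bullet> isect a b i j = 1"
  by (simp add: inner_isect, simp add: Dt_def algebra_simps)

lemma inner_isect_right: "Dt a b i j \<noteq> 0 \<Longrightarrow> (a j, b j) \<bullet> isect a b i j = 1"
  by (simp add: inner_isect, simp add: Dt_def algebra_simps)

theorem theorem1:
  fixes n :: nat and a b :: "nat \<Rightarrow> real"
  assumes n3: "n \<ge> 3"
    and nz: "\<forall>k\<in>{1..n}. (a k)\<^sup>2 + (b k)\<^sup>2 \<noteq> 0"
    and Dpos: "\<forall>i\<in>{1..n}. a i * b (cnext n i) - b i * a (cnext n i) > 0"
    and sep: "\<forall>i\<in>{1..n}. \<forall>k\<in>{1..n} - {i, cnext n i}.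
               - a k * (b i - b (cnext n i)) + b k * (a i - a (cnext n i))
               - (a i * b (cnext n i) - b i * a (cnext n i)) < 0"
  shows "convex (region n a b) \<and> compact (region n a b)
    \<and> (0, 0) \<in> interior (region n a b)
    \<and> frontier (region n a b) =
        (\<Union>k\<in>{1..n}. closed_segment (isect a b (cprev n k) k) (isect a b k (cnext n k)))
    \<and> inj_on (\<lambda>i. isect a b i (cnext n i)) {1..n}
    \<and> (\<forall>k\<in>{1..n}. \<not> collinear {isect a b (cprev n k) k, isect a b k (cnext n k),
                                   isect a b (cnext n k) (cnext n (cnext n k))})
    \<and> (\<forall>k\<in>{1..n}. closed_segment (isect a b (cprev n k) k) (isect a b k (cnext n k))
                     \<subseteq> line a b k)"
proof -
  interpret polar_polygon n "\<lambda>k. (a k, b k)" "\<lambda>i. isect a b i (cnext n i)"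
  proof
    fix i assume i: "i \<in> {1..n}"
    then have D: "Dt a b i (cnext n i) > 0"
      using Dpos by (simp add: Dt_def)
    then show "(a i, b i) \<bullet> isect a b i (cnext n i) = 1"
      "(a (cnext n i), b (cnext n i)) \<bullet> isect a b i (cnext n i) = 1"
      by (simp_all add: inner_isect_left inner_isect_right)
    fix k assume "k \<in> {1..n}" "k \<noteq> i" "k \<noteq> cnext n i"
    then show "(a k, b k) \<bullet> isect a b i (cnext n i) < 1"
      using sep i D by (simp add: inner_isect Dt_def divide_less_eq algebra_simps)
  qed (use n3 nz in \<open>auto simp: zero_prod_def\<close>)
  have edge: "isect a b (cprev n k) k = isect a b (cprev n k) (cnext n (cprev n k))"
    if "k \<in> {1..n}" for k
    using cnext_cprev[OF that] by simp
  have dim: "DIM(real \<times> real) = 2"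
    by simp
  show ?thesis
    unfolding region_eq_polar line_eq_hyperplane
  proof (intro conjI ballI)
    show "convex polygon"
      by (rule convex_polar)
    show "compact polygon"
      using closed_polar bounded_polygon[OF dim] by (simp add: compact_eq_bounded_closed)
    show "(0, 0) \<in> interior polygon"
      unfolding interior_polygon by simp
    show "frontier polygon =
        (\<Union>k\<in>{1..n}. closed_segment (isect a b (cprev n k) k) (isect a b k (cnext n k)))"
      unfolding frontier_polygon[OF dim] by (intro SUP_cong refl) (metis edge)
    show "inj_on (\<lambda>i. isect a b i (cnext n i)) {1..n}"
      by (rule inj_on_vertices)
    fix k assume k: "k \<in> {1..n}"
    show "\<not> collinear {isect a b (cprev n k) k, isect a b k (cnext n k),
        isect a b (cnext n k) (cnext n (cnext n k))}"
      using vertices_not_collinear[OF k] by (simp add: edge[OF k])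
    show "closed_segment (isect a b (cprev n k) k) (isect a b k (cnext n k))
        \<subseteq> {x. (a k, b k) \<bullet> x = 1}"
      using edge_subset_line[OF k] by (simp add: edge[OF k])
  qed
qed

end
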